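(* Let $1\le \ell\le k-1$, $n\ge 187k$, and let $G$ be an extremal graph as in the context. Then $\lambda(G)>\lfloor (n-2\ell)/2\rfloor> n/2-k$ and $e(G)\ge \frac{n^2}{4}-kn+k$.
   Context: Fix integers $1\le\ell\le k-1$ and $n\ge 187k$. Let $\mathcal{C}_{\ell,k}=\{C_3,C_5,\ldots,C_{2\ell-1},C_{2k+1}\}$ (for $\ell=1$, $\mathcal{C}_{1,k}=\{C_{2k+1}\}$). An extremal graph is an $n$-vertex non-bipartite graph $G$ containing no member of $\mathcal{C}_{\ell,k}$ as a subgraph and having the maximum spectral radius $\lambda(G)$ (largest adjacency eigenvalue) among all such graphs. $T_{m,2}$ is the balanced complete bipartite graph on $m$ vertices, and $C_{2\ell+1}(T_{n-2\ell,2})$ is the graph obtained by identifying a vertex of $C_{2\ell+1}$ with a vertex of the smaller part of $T_{n-2\ell,2}$; it is non-bipartite and $\mathcal{C}_{\ell,k}$-free, so $\lambda(G)\ge\lambda(C_{2\ell+1}(T_{n-2\ell,2}))$. $e(G)$ is the number of edges. *)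

theory Defs
  imports Complex_Main "Jordan_Normal_Form.Char_Poly"
begin

definition simple_graph :: "nat \<Rightarrow> (nat \<Rightarrow> nat \<Rightarrow> bool) \<Rightarrow> bool" where
  "simple_graph n E \<longleftrightarrow> (\<forall>u v. E u v \<longrightarrow> u < n \<and> v < n \<and> u \<noteq> v \<and> E v u)"

definition num_edges :: "nat \<Rightarrow> (nat \<Rightarrow> nat \<Rightarrow> bool) \<Rightarrow> nat" where
  "num_edges n E = card {(u, v). u < v \<and> v < n \<and> E u v}"

definition bipartite :: "nat \<Rightarrow> (nat \<Rightarrow> nat \<Rightarrow> bool) \<Rightarrow> bool" where
  "bipartite n E \<longleftrightarrow> (\<exists>S. \<forall>u<n. \<forall>v<n. E u v \<longrightarrow> (u \<in> S \<longleftrightarrow> v \<notin> S))"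

definition has_cycle :: "nat \<Rightarrow> (nat \<Rightarrow> nat \<Rightarrow> bool) \<Rightarrow> nat \<Rightarrow> bool" where
  "has_cycle n E m \<longleftrightarrow> 3 \<le> m \<and> (\<exists>f. inj_on f {0..<m} \<and> f ` {0..<m} \<subseteq> {0..<n} \<and>
       (\<forall>i<m. E (f i) (f (Suc i mod m))))"

definition Clk_free :: "nat \<Rightarrow> nat \<Rightarrow> nat \<Rightarrow> (nat \<Rightarrow> nat \<Rightarrow> bool) \<Rightarrow> bool" where
  "Clk_free l k n E \<longleftrightarrow> (\<forall>i. 1 \<le> i \<and> i \<le> l - 1 \<longrightarrow> \<not> has_cycle n E (2 * i + 1))
      \<and> \<not> has_cycle n E (2 * k + 1)"

definition adj_mat :: "nat \<Rightarrow> (nat \<Rightarrow> nat \<Rightarrow> bool) \<Rightarrow> real mat" where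
  "adj_mat n E = mat n n (\<lambda>(i, j). if E i j then 1 else 0)"

definition spec_rad :: "nat \<Rightarrow> (nat \<Rightarrow> nat \<Rightarrow> bool) \<Rightarrow> real" where
  "spec_rad n E = Max {\<mu>. eigenvalue (adj_mat n E) \<mu>}"

definition extremal :: "nat \<Rightarrow> nat \<Rightarrow> nat \<Rightarrow> (nat \<Rightarrow> nat \<Rightarrow> bool) \<Rightarrow> bool" where
  "extremal l k n E \<longleftrightarrow> simple_graph n E \<and> \<not> bipartite n E \<and> Clk_free l k n E \<and>
     (\<forall>H. simple_graph n H \<and> \<not> bipartite n H \<and> Clk_free l k n H \<longrightarrow> spec_rad n H \<le> spec_rad n E)"

end

theory Submission
  imports Defs "Jordan_Normal_Form.Spectral_Radius"
begin

text \<open>The graph \<open>H\<close> obtained by gluing \<open>C\<^sub>2\<^sub>l\<^sub>+\<^sub>1\<close> to \<open>T\<^sub>n\<^sub>-\<^sub>2\<^sub>l\<^sub>,\<^sub>2\<close> (parts of sizes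
  \<open>a = \<lfloor>(n - 2l)/2\<rfloor> \<le> b\<close>) is non-bipartite and \<open>\<C>\<^sub>l\<^sub>,\<^sub>k\<close>-free, since its only odd cycle is
  the glued one. A test vector extending the Perron vector of \<open>K\<^sub>a\<^sub>,\<^sub>b\<close> shows
  \<open>\<lambda>(H) > \<surd>(ab) \<ge> a\<close>, and \<open>\<lambda>(G) \<ge> \<lambda>(H)\<close> by extremality. For the edges, Cauchy--Schwarz on
  the eigenvalue equation gives \<open>\<lambda>(G)\<^sup>2 \<le> e(G) + max\<^sub>z e(G[N(z)])\<close>. A path on \<open>2k\<close> vertices
  inside \<open>N(z)\<close> would close through \<open>z\<close> to a \<open>C\<^sub>2\<^sub>k\<^sub>+\<^sub>1\<close>, so Erdos--Gallai gives
  \<open>e(G[N(z)]) \<le> (k - 1)(n - 1)\<close>; for \<open>l \<ge> 2\<close> the graph is triangle-free and the neighbourhoods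
  are independent. Together with \<open>\<lambda>(G)\<^sup>2 > ab \<ge> ((n - 2l)\<^sup>2 - 1)/4\<close> this bounds \<open>e(G)\<close>.
  The Rayleigh principle for symmetric matrices is derived directly: a maximiser of the quadratic
  form on the unit sphere exists by compactness and is an eigenvector.\<close>

definition sq_norm :: "nat \<Rightarrow> (nat \<Rightarrow> real) \<Rightarrow> real" where
  "sq_norm n y = (\<Sum>i<n. (y i)^2)"

definition quad_form :: "nat \<Rightarrow> (nat \<Rightarrow> nat \<Rightarrow> real) \<Rightarrow> (nat \<Rightarrow> real) \<Rightarrow> real" where
  "quad_form n a y = (\<Sum>i<n. \<Sum>j<n. a i j * y i * y j)"

lemma sq_norm_nonneg: "0 \<le> sq_norm n y"
  unfolding sq_norm_def by (intro sum_nonneg) auto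

lemma sq_norm_eq_0_iff: "sq_norm n y = 0 \<longleftrightarrow> (\<forall>i<n. y i = 0)"
  unfolding sq_norm_def by (subst sum_nonneg_eq_0_iff) auto

lemma square_le_sq_norm: "i < n \<Longrightarrow> (y i)^2 \<le> sq_norm n y"
  unfolding sq_norm_def by (intro member_le_sum) auto

lemma square_sum_le_card_mult_sum_squares:
  fixes f :: "'a \<Rightarrow> real"
  assumes "finite A"
  shows "(\<Sum>i\<in>A. f i)^2 \<le> real (card A) * (\<Sum>i\<in>A. (f i)^2)"
proof -
  have "(\<Sum>i\<in>A. f i)^2 = (\<Sum>i\<in>A. \<Sum>j\<in>A. f i * f j)"
    by (simp add: power2_eq_square sum_product)
  also have "\<dots> \<le> (\<Sum>i\<in>A. \<Sum>j\<in>A. ((f i)^2 + (f j)^2) / 2)"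
  proof (intro sum_mono)
    fix i j show "f i * f j \<le> ((f i)^2 + (f j)^2) / 2"
      using sum_squares_ge_zero[of "f i - f j" 0] by (simp add: power2_eq_square algebra_simps)
  qed
  also have "\<dots> = real (card A) * (\<Sum>i\<in>A. (f i)^2)"
    by (simp add: sum.distrib add_divide_distrib sum_divide_distrib[symmetric] sum.swap[of _ A A]
        sum_distrib_left[symmetric] mult.commute)
  finally show ?thesis .
qed

lemma bounded_vector_sequence_convergent_subseq:
  fixes Y :: "nat \<Rightarrow> nat \<Rightarrow> real"
  assumes "\<And>j i. i < n \<Longrightarrow> \<bar>Y j i\<bar> \<le> B"
  shows "\<exists>r z. strict_mono r \<and> (\<forall>i<n. (\<lambda>j. Y (r j) i) \<longlonglongrightarrow> z i)"
  using assms
proof (induction n)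
  case 0
  then show ?case by (intro exI[of _ id]) (auto simp: strict_mono_def)
next
  case (Suc n)
  then obtain r z where r: "strict_mono r" and z: "\<forall>i<n. (\<lambda>j. Y (r j) i) \<longlonglongrightarrow> z i"
    by force
  obtain r' where r': "strict_mono r'" and mono: "monoseq (\<lambda>j. Y (r (r' j)) n)"
    using seq_monosub[of "\<lambda>j. Y (r j) n"] by blast
  have "Bseq (\<lambda>j. Y (r (r' j)) n)"
    using Suc.prems by (intro BseqI'[of _ B]) auto
  then obtain L where L: "(\<lambda>j. Y (r (r' j)) n) \<longlonglongrightarrow> L"
    using mono Bseq_monoseq_convergent convergent_def by blast
  have "(\<lambda>j. Y (r (r' j)) i) \<longlonglongrightarrow> (z(n := L)) i" if "i < Suc n" for i
  proof (cases "i = n")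
    case False
    then show ?thesis
      using LIMSEQ_subseq_LIMSEQ[OF z[rule_format] r', of i] that by (simp add: o_def)
  qed (use L in simp)
  then show ?case
    using strict_mono_o[OF r r', unfolded o_def]
    by (intro exI[of _ "r \<circ> r'"] exI[of _ "z(n := L)"]) simp
qed

lemma quad_form_le_sum_abs_mult_sq_norm:
  "quad_form n a y \<le> (\<Sum>i<n. \<Sum>j<n. \<bar>a i j\<bar>) * sq_norm n y"
proof -
  have "a i j * y i * y j \<le> \<bar>a i j\<bar> * sq_norm n y" if "i < n" "j < n" for i j
  proof -
    have "\<bar>y i * y j\<bar> \<le> ((y i)^2 + (y j)^2) / 2"
      using sum_squares_ge_zero[of "\<bar>y i\<bar> - \<bar>y j\<bar>" 0]
      by (simp add: power2_eq_square algebra_simps abs_mult)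
    also have "\<dots> \<le> sq_norm n y"
      using square_le_sq_norm[OF that(1), of y] square_le_sq_norm[OF that(2), of y] by simp
    finally have "\<bar>a i j\<bar> * \<bar>y i * y j\<bar> \<le> \<bar>a i j\<bar> * sq_norm n y"
      by (intro mult_left_mono) auto
    moreover have "a i j * y i * y j \<le> \<bar>a i j\<bar> * \<bar>y i * y j\<bar>"
      by (metis abs_ge_self abs_mult mult.assoc)
    ultimately show ?thesis by linarith
  qed
  then have "quad_form n a y \<le> (\<Sum>i<n. \<Sum>j<n. \<bar>a i j\<bar> * sq_norm n y)"
    unfolding quad_form_def by (intro sum_mono) auto
  then show ?thesis by (simp add: sum_distrib_right)
qed

lemma tendsto_sq_norm_quad_form:
  assumes "\<forall>i<n. (\<lambda>j. Y j i) \<longlonglongrightarrow> z i"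
  shows "(\<lambda>j. sq_norm n (Y j)) \<longlonglongrightarrow> sq_norm n z"
    and "(\<lambda>j. quad_form n a (Y j)) \<longlonglongrightarrow> quad_form n a z"
  unfolding sq_norm_def quad_form_def using assms
  by (auto intro!: tendsto_sum tendsto_mult tendsto_power tendsto_const)

lemma sq_norm_unit_vector: "0 < n \<Longrightarrow> sq_norm n (\<lambda>i. if i = 0 then 1 else 0) = 1"
  unfolding sq_norm_def by (simp add: if_distrib[of "\<lambda>x. x^2"] cong: if_cong)

lemma quad_form_attains_max_on_sphere:
  assumes "0 < n"
  shows "\<exists>z. sq_norm n z = 1 \<and> (\<forall>y. sq_norm n y = 1 \<longrightarrow> quad_form n a y \<le> quad_form n a z)"
proof -
  define U where "U = {y. sq_norm n y = 1}"
  define s where "s = Sup (quad_form n a ` U)"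
  have ne: "quad_form n a ` U \<noteq> {}" using sq_norm_unit_vector[OF assms] unfolding U_def by auto
  have "quad_form n a y \<le> (\<Sum>i<n. \<Sum>j<n. \<bar>a i j\<bar>)" if "y \<in> U" for y
    using quad_form_le_sum_abs_mult_sq_norm[of n a y] that unfolding U_def by simp
  then have bdd: "bdd_above (quad_form n a ` U)"
    by (rule bdd_aboveI2)
  have le_s: "quad_form n a y \<le> s" if "y \<in> U" for y
    unfolding s_def using that bdd by (intro cSup_upper) auto
  have "\<exists>y. y \<in> U \<and> s - inverse (real (Suc j)) < quad_form n a y" for j
  proof -
    have "s - inverse (real (Suc j)) < s" by simp
    then show ?thesis using less_cSup_iff[OF ne bdd] unfolding s_def by blast
  qed
  then obtain Y where Y: "\<And>j. Y j \<in> U" "\<And>j. s - inverse (real (Suc j)) < quad_form n a (Y j)"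
    by metis
  have "\<bar>Y j i\<bar> \<le> 1" if "i < n" for j i
    using square_le_sq_norm[OF that, of "Y j"] Y(1)[of j] unfolding U_def by (simp add: abs_square_le_1)
  then obtain r z where r: "strict_mono r" and lim: "\<forall>i<n. (\<lambda>j. Y (r j) i) \<longlonglongrightarrow> z i"
    using bounded_vector_sequence_convergent_subseq by blast
  have "(\<lambda>j. sq_norm n (Y (r j))) \<longlonglongrightarrow> sq_norm n z"
    using lim by (rule tendsto_sq_norm_quad_form(1))
  moreover have "(\<lambda>j. sq_norm n (Y (r j))) = (\<lambda>j. 1)" using Y(1) unfolding U_def by auto
  ultimately have z_sphere: "sq_norm n z = 1" using LIMSEQ_unique tendsto_const by metis
  have "(\<lambda>j. s - inverse (real (Suc (r j)))) \<longlonglongrightarrow> s - 0"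
    using tendsto_diff[OF tendsto_const LIMSEQ_subseq_LIMSEQ[OF LIMSEQ_inverse_real_of_nat r]]
    by (simp add: o_def)
  moreover have "(\<lambda>j. quad_form n a (Y (r j))) \<longlonglongrightarrow> quad_form n a z"
    using lim by (rule tendsto_sq_norm_quad_form(2))
  ultimately have "s \<le> quad_form n a z"
    using Y(2) by (intro LIMSEQ_le) (auto intro: less_imp_le)
  moreover have "quad_form n a y \<le> s" if "sq_norm n y = 1" for y
    using le_s that unfolding U_def by simp
  ultimately show ?thesis using z_sphere by force
qed

lemma quad_form_le_scaled:
  assumes "\<And>y. sq_norm n y = 1 \<Longrightarrow> quad_form n a y \<le> s"
  shows "quad_form n a y \<le> s * sq_norm n y"
proof (cases "sq_norm n y = 0")
  case True
  then have "quad_form n a y = 0" by (simp add: sq_norm_eq_0_iff quad_form_def)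
  with True show ?thesis by simp
next
  case False
  define t where "t = sqrt (sq_norm n y)"
  have t: "t > 0" "t * t = sq_norm n y"
    unfolding t_def using False sq_norm_nonneg[of n y] by auto
  have "sq_norm n (\<lambda>i. y i / t) = sq_norm n y / (t * t)"
    unfolding sq_norm_def by (simp add: power_divide power2_eq_square sum_divide_distrib)
  moreover have "quad_form n a (\<lambda>i. y i / t) = quad_form n a y / (t * t)"
    unfolding quad_form_def by (simp add: sum_divide_distrib)
  ultimately have "quad_form n a y / (t * t) \<le> s"
    using assms[of "\<lambda>i. y i / t"] t False by simp
  moreover have "0 < sq_norm n y" using t by (metis mult_pos_pos)
  ultimately show ?thesis using t by (simp add: divide_le_eq mult.commute)
qed

text \<open>First variation: with \<open>g = a z - s z\<close>, the inequality \<open>max\<close> at \<open>z + t g\<close> reads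
  \<open>2 t |g|\<^sup>2 + O(t\<^sup>2) \<le> 0\<close> for every real \<open>t\<close>, forcing \<open>g = 0\<close>.\<close>
lemma quad_form_maximiser_eigenvector:
  assumes sym: "\<And>i j. a i j = a j i"
    and max: "\<And>y. quad_form n a y \<le> s * sq_norm n y"
    and z: "quad_form n a z = s * sq_norm n z"
  shows "\<forall>i<n. (\<Sum>j<n. a i j * z j) = s * z i"
proof -
  define g where "g i = (\<Sum>j<n. a i j * z j) - s * z i" for i
  define D where "D = quad_form n a g - s * sq_norm n g"
  have quad_shift: "quad_form n a (\<lambda>i. z i + t * g i)
      = quad_form n a z + 2 * t * (\<Sum>i<n. g i * (\<Sum>j<n. a i j * z j)) + t^2 * quad_form n a g" for t
  proof -
    have "quad_form n a (\<lambda>i. z i + t * g i) = quad_form n a z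
        + t * (\<Sum>i<n. \<Sum>j<n. a i j * g i * z j) + t * (\<Sum>i<n. \<Sum>j<n. a i j * z i * g j)
        + t^2 * quad_form n a g"
      unfolding quad_form_def
      by (simp add: algebra_simps power2_eq_square sum.distrib sum_distrib_left)
    also have "(\<Sum>i<n. \<Sum>j<n. a i j * z i * g j) = (\<Sum>i<n. \<Sum>j<n. a i j * g i * z j)"
      by (subst sum.swap) (simp add: sym mult.commute mult.left_commute)
    also have "(\<Sum>i<n. \<Sum>j<n. a i j * g i * z j) = (\<Sum>i<n. g i * (\<Sum>j<n. a i j * z j))"
      by (simp add: sum_distrib_left mult.commute mult.left_commute)
    finally show ?thesis by (simp add: algebra_simps)
  qed
  have norm_shift: "sq_norm n (\<lambda>i. z i + t * g i)
      = sq_norm n z + 2 * t * (\<Sum>i<n. g i * z i) + t^2 * sq_norm n g" for t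
    unfolding sq_norm_def
    by (simp add: power2_eq_square algebra_simps sum.distrib sum_distrib_left)
  have "(\<Sum>i<n. g i * (\<Sum>j<n. a i j * z j)) - s * (\<Sum>i<n. g i * z i) = sq_norm n g"
    unfolding sq_norm_def g_def
    by (simp add: power2_eq_square sum_subtractf[symmetric] sum_distrib_left algebra_simps)
  then have variation: "2 * t * sq_norm n g + t^2 * D \<le> 0" for t
    using max[of "\<lambda>i. z i + t * g i"] z unfolding quad_shift norm_shift D_def
    by (simp add: algebra_simps)
  have "sq_norm n g = 0"
  proof (rule ccontr)
    assume "sq_norm n g \<noteq> 0"
    then have G: "sq_norm n g > 0" using sq_norm_nonneg[of n g] by simp
    define t where "t = sq_norm n g / (1 + \<bar>D\<bar>)"
    have t: "t > 0" "t * \<bar>D\<bar> \<le> sq_norm n g"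
      unfolding t_def using G by (auto simp: field_simps)
    then have "t^2 * \<bar>D\<bar> \<le> t * sq_norm n g"
      by (simp add: power2_eq_square mult.assoc mult_left_mono)
    moreover have "- (t^2 * \<bar>D\<bar>) \<le> t^2 * D"
      using mult_left_mono[of "-\<bar>D\<bar>" D "t^2"] by simp
    moreover have "0 < t * sq_norm n g" using t G by simp
    ultimately show False using variation[of t] by linarith
  qed
  then show ?thesis unfolding sq_norm_eq_0_iff g_def by simp
qed

lemma symmetric_quad_form_max_eigenpair:
  assumes "0 < n" and "\<And>i j. a i j = a j i"
  obtains x \<mu> where "sq_norm n x = 1" and "\<forall>i<n. (\<Sum>j<n. a i j * x j) = \<mu> * x i"
    and "\<And>y. quad_form n a y \<le> \<mu> * sq_norm n y"
proof -
  obtain z where z: "sq_norm n z = 1" "\<And>y. sq_norm n y = 1 \<Longrightarrow> quad_form n a y \<le> quad_form n a z"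
    using quad_form_attains_max_on_sphere[OF assms(1)] by blast
  have max: "quad_form n a y \<le> quad_form n a z * sq_norm n y" for y
    using quad_form_le_scaled z(2) by blast
  show ?thesis
    using that[OF z(1) quad_form_maximiser_eigenvector[OF assms(2) max] max] z(1) by simp
qed

definition edge_ind :: "(nat \<Rightarrow> nat \<Rightarrow> bool) \<Rightarrow> nat \<Rightarrow> nat \<Rightarrow> real" where
  "edge_ind E u v = (if E u v then 1 else 0)"

lemma edge_ind_sym: "simple_graph n E \<Longrightarrow> edge_ind E u v = edge_ind E v u"
  unfolding edge_ind_def simple_graph_def by metis

lemma adj_mat_mult_vec_nth:
  assumes "i < n"
  shows "(adj_mat n E *\<^sub>v vec n x) $ i = (\<Sum>j<n. edge_ind E i j * x j)"
  using assms by (auto simp: adj_mat_def scalar_prod_def edge_ind_def lessThan_atLeast0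
      intro!: sum.cong)

lemma eigenvalue_adj_mat_iff:
  "eigenvalue (adj_mat n E) \<mu> \<longleftrightarrow>
    (\<exists>x. (\<exists>i<n. x i \<noteq> 0) \<and> (\<forall>i<n. (\<Sum>j<n. edge_ind E i j * x j) = \<mu> * x i))"
proof
  assume "eigenvalue (adj_mat n E) \<mu>"
  then obtain v where v: "v \<in> carrier_vec n" "v \<noteq> 0\<^sub>v n" "adj_mat n E *\<^sub>v v = \<mu> \<cdot>\<^sub>v v"
    unfolding eigenvalue_def eigenvector_def by (auto simp: adj_mat_def)
  then have "v = vec n (\<lambda>i. v $ i)" by auto
  with v show "\<exists>x. (\<exists>i<n. x i \<noteq> 0) \<and> (\<forall>i<n. (\<Sum>j<n. edge_ind E i j * x j) = \<mu> * x i)"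
    by (intro exI[of _ "\<lambda>i. v $ i"]) (metis adj_mat_mult_vec_nth eq_vecI index_smult_vec(1)
        index_zero_vec carrier_vecD index_zero_vec(2))
next
  assume "\<exists>x. (\<exists>i<n. x i \<noteq> 0) \<and> (\<forall>i<n. (\<Sum>j<n. edge_ind E i j * x j) = \<mu> * x i)"
  then obtain x i where x: "i < n" "x i \<noteq> 0" "\<forall>i<n. (\<Sum>j<n. edge_ind E i j * x j) = \<mu> * x i"
    by blast
  have "vec n x \<noteq> 0\<^sub>v n" using x(1,2) by (metis index_vec index_zero_vec(1))
  moreover have "(adj_mat n E *\<^sub>v vec n x) $ i = (\<mu> \<cdot>\<^sub>v vec n x) $ i" if "i < n" for i
    using x(3) that by (simp add: adj_mat_mult_vec_nth)
  then have "adj_mat n E *\<^sub>v vec n x = \<mu> \<cdot>\<^sub>v vec n x"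
    by (intro eq_vecI) (simp_all add: adj_mat_def)
  ultimately show "eigenvalue (adj_mat n E) \<mu>"
    unfolding eigenvalue_def eigenvector_def by (intro exI[of _ "vec n x"]) (auto simp: adj_mat_def)
qed

lemma finite_eigenvalues_adj_mat: "finite {\<mu>. eigenvalue (adj_mat n E) \<mu>}"
  using card_finite_spectrum(1)[of "adj_mat n E" n] by (simp add: spectrum_def adj_mat_def)

lemma eigenvalue_le_spec_rad: "eigenvalue (adj_mat n E) \<mu> \<Longrightarrow> \<mu> \<le> spec_rad n E"
  unfolding spec_rad_def using finite_eigenvalues_adj_mat by (intro Max_ge) auto

lemma spec_rad_quad_form_bound:
  assumes "0 < n" and "simple_graph n E"
  shows "eigenvalue (adj_mat n E) (spec_rad n E)"
    and "quad_form n (edge_ind E) y \<le> spec_rad n E * sq_norm n y"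
proof -
  have "edge_ind E i j = edge_ind E j i" for i j by (rule edge_ind_sym[OF assms(2)])
  then obtain x \<mu> where x: "sq_norm n x = 1" "\<forall>i<n. (\<Sum>j<n. edge_ind E i j * x j) = \<mu> * x i"
    and max: "\<And>y. quad_form n (edge_ind E) y \<le> \<mu> * sq_norm n y"
    using symmetric_quad_form_max_eigenpair[OF assms(1)] by metis
  have "\<exists>i<n. x i \<noteq> 0" using x(1) sq_norm_eq_0_iff[of n x] by auto
  with x(2) have ev: "eigenvalue (adj_mat n E) \<mu>" unfolding eigenvalue_adj_mat_iff by blast
  then have "\<mu> \<le> spec_rad n E" by (rule eigenvalue_le_spec_rad)
  then show "quad_form n (edge_ind E) y \<le> spec_rad n E * sq_norm n y"
    using max[of y] mult_right_mono[OF _ sq_norm_nonneg[of n y]] by (meson order_trans)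
  from ev show "eigenvalue (adj_mat n E) (spec_rad n E)"
    unfolding spec_rad_def using Max_in[OF finite_eigenvalues_adj_mat] by blast
qed

definition bipartite_block :: "nat \<Rightarrow> nat \<Rightarrow> nat \<Rightarrow> nat \<Rightarrow> nat \<Rightarrow> bool" where
  "bipartite_block n c p u v \<longleftrightarrow> c \<le> u \<and> u < n \<and> c \<le> v \<and> v < n \<and> (u < p \<longleftrightarrow> \<not> v < p)"

definition cycle_block :: "nat \<Rightarrow> nat \<Rightarrow> nat \<Rightarrow> bool" where
  "cycle_block c u v \<longleftrightarrow>
    u \<le> c \<and> v \<le> c \<and> (u = Suc v \<or> v = Suc u \<or> (u = 0 \<and> v = c) \<or> (u = c \<and> v = 0))"

text \<open>For \<open>c = 2 l\<close> and \<open>p - c = \<lfloor>(n - c) / 2\<rfloor>\<close> this is \<open>C\<^sub>2\<^sub>l\<^sub>+\<^sub>1(T\<^sub>n\<^sub>-\<^sub>2\<^sub>l\<^sub>,\<^sub>2)\<close>: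
  the cycle \<open>0, 1, \<dots>, c\<close> and the complete bipartite graph with parts \<open>{c..<p}\<close> and
  \<open>{p..<n}\<close> share the vertex \<open>c\<close>.\<close>
definition glued_graph :: "nat \<Rightarrow> nat \<Rightarrow> nat \<Rightarrow> nat \<Rightarrow> nat \<Rightarrow> bool" where
  "glued_graph n c p u v \<longleftrightarrow> bipartite_block n c p u v \<or> cycle_block c u v"

lemmas glued_graph_defs = glued_graph_def bipartite_block_def cycle_block_def

lemma simple_graph_glued_graph: "2 \<le> c \<Longrightarrow> c < n \<Longrightarrow> simple_graph n (glued_graph n c p)"
  unfolding simple_graph_def glued_graph_defs by auto

lemma not_bipartite_glued_graph:
  assumes "2 \<le> c" "even c" "c < n"
  shows "\<not> bipartite n (glued_graph n c p)"
proof
  assume "bipartite n (glued_graph n c p)"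
  then obtain S where S: "\<forall>u<n. \<forall>v<n. glued_graph n c p u v \<longrightarrow> (u \<in> S \<longleftrightarrow> v \<notin> S)"
    unfolding bipartite_def by blast
  have alternate: "i \<le> c \<Longrightarrow> (i \<in> S \<longleftrightarrow> (0 \<in> S \<longleftrightarrow> even i))" for i
  proof (induction i)
    case (Suc i)
    then have "glued_graph n c p i (Suc i)" unfolding glued_graph_defs by simp
    then have "i \<in> S \<longleftrightarrow> Suc i \<notin> S" using S Suc.prems assms(3) by simp
    with Suc show ?case by auto
  qed simp
  have "glued_graph n c p c 0" unfolding glued_graph_defs by simp
  then show False using S alternate[of c] assms by auto
qed

lemma closed_walk_alternating_even:
  fixes f :: "nat \<Rightarrow> 'a" and \<chi> :: "'a \<Rightarrow> bool"
  assumes "\<forall>i<m. \<chi> (f i) \<noteq> \<chi> (f (Suc i mod m))" and "1 \<le> m"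
  shows "even m"
proof -
  have alternate: "i < m \<Longrightarrow> (\<chi> (f i) \<longleftrightarrow> (\<chi> (f 0) \<longleftrightarrow> even i))" for i
  proof (induction i)
    case (Suc i)
    then have "\<chi> (f i) \<noteq> \<chi> (f (Suc i))" using assms(1) by (metis Suc_lessD mod_less)
    with Suc show ?case by auto
  qed simp
  have "\<chi> (f (m - 1)) \<noteq> \<chi> (f 0)"
    using assms(1)[rule_format, of "m - 1"] assms(2) by simp
  then show ?thesis using alternate[of "m - 1"] assms(2) by (cases m) auto
qed

lemma walk_passes_separator:
  fixes g :: "nat \<Rightarrow> 'a"
  assumes step: "\<forall>r<R. \<not> (X (g r) \<and> Y (g (Suc r)))"
    and cover: "\<forall>r\<le>R. X (g r) \<or> Y (g r) \<or> g r = h"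
    and "\<not> X h"
  shows "r1 < r2 \<Longrightarrow> r2 \<le> R \<Longrightarrow> X (g r1) \<Longrightarrow> Y (g r2) \<Longrightarrow> \<exists>r. r1 < r \<and> r < r2 \<and> g r = h"
proof (induction r2)
  case (Suc r)
  then have "\<not> X (g r)" using step by auto
  then have "r1 < r" using Suc.prems by (metis less_Suc_eq)
  moreover have "Y (g r) \<or> g r = h" using cover[rule_format, of r] \<open>\<not> X (g r)\<close> Suc.prems by simp
  ultimately show ?case
  proof (elim conjE disjE)
    assume "r1 < r" "Y (g r)"
    then show ?case using Suc.IH Suc.prems by (auto intro: less_SucI)
  qed auto
qed simp

lemma odd_cycle_in_cycle_block:
  assumes inj: "inj_on f {0..<m}" and m: "1 \<le> m" and odd: "odd m"
    and inside: "\<forall>i<m. f i \<le> c"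
    and edge: "\<forall>i<m. cycle_block c (f i) (f (Suc i mod m))"
  shows "m = Suc c"
proof (rule ccontr)
  assume ne: "m \<noteq> Suc c"
  have "card (f ` {0..<m}) = m" using inj by (simp add: card_image)
  moreover have sub: "f ` {0..<m} \<subseteq> {0..c}" using inside by auto
  ultimately have "m < Suc c" using ne card_mono[OF _ sub] by fastforce
  then have "\<not> {0..c} \<subseteq> f ` {0..<m}"
    using card_mono[of "f ` {0..<m}" "{0..c}"] \<open>card (f ` {0..<m}) = m\<close> by fastforce
  then obtain j where j: "j \<le> c" "j \<notin> f ` {0..<m}" by (auto simp: subset_iff)
  text \<open>Deleting the unused vertex \<open>j\<close> leaves a path, which is 2-coloured by the parity of
    the distance from \<open>j\<close> along the cycle.\<close>
  define \<chi> where "\<chi> v = (if j \<le> v then even (v - j) else even (v + c + 1 - j))" for v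
  have "\<chi> (f i) \<noteq> \<chi> (f (Suc i mod m))" if i: "i < m" for i
  proof -
    have "Suc i mod m < m" using m by simp
    then have "f i \<le> c" "f (Suc i mod m) \<le> c" "f i \<noteq> j" "f (Suc i mod m) \<noteq> j"
      using inside i j by auto
    moreover have "cycle_block c (f i) (f (Suc i mod m))" using edge i by simp
    ultimately show ?thesis
      unfolding \<chi>_def cycle_block_def using j(1)
      by (elim conjE disjE) (simp_all split: if_split; presburger)+
  qed
  then have "even m" using closed_walk_alternating_even[of m \<chi> f] m by blast
  then show False using odd by simp
qed

lemma glued_graph_no_cycle_across_cut_vertex:
  assumes inj: "inj_on f {0..<m}"
    and edge: "\<forall>i<m. glued_graph n c p (f i) (f (Suc i mod m))"
    and i: "i < m" "f i < c" and i': "i' < m" "c < f i'"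
  shows False
proof -
  text \<open>Read the cycle starting at \<open>i\<close>: both arcs between \<open>f i\<close> and \<open>f i'\<close> pass through
    the cut vertex \<open>c\<close>.\<close>
  define idx where "idx r = (if i + r < m then i + r else i + r - m)" for r
  define g where "g r = f (idx r)" for r
  have idx_lt: "r < m \<Longrightarrow> idx r < m" for r using i unfolding idx_def by auto
  have g_step: "glued_graph n c p (g r) (g (Suc r))" if "r < m" for r
  proof -
    have "Suc (idx r) mod m = idx (Suc r)"
      using that i idx_lt[OF that] unfolding idx_def by (auto simp: mod_if split: if_splits)
    then show ?thesis using edge idx_lt[OF that] unfolding g_def by metis
  qed
  have no_cross: "\<not> (u < c \<and> c < v)" "\<not> (c < u \<and> v < c)" if "glued_graph n c p u v" for u v
    using that unfolding glued_graph_defs by auto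
  define s where "s = (if i \<le> i' then i' - i else i' + m - i)"
  have "i \<noteq> i'" using i i' by auto
  then have s: "0 < s" "s < m" "g s = f i'" using i i' unfolding s_def g_def idx_def by auto
  have g0: "g 0 = f i" "g m = f i" using i unfolding g_def idx_def by auto
  have cover: "\<forall>r\<le>m. g r < c \<or> c < g r \<or> g r = c" "\<forall>r\<le>m. c < g r \<or> g r < c \<or> g r = c"
    by auto
  obtain r where r: "0 < r" "r < s" "g r = c"
    using walk_passes_separator[of m "\<lambda>v. v < c" g "\<lambda>v. c < v" c 0 s] g_step no_cross(1)
      cover(1) s g0 i i' by auto
  obtain r' where r': "s < r'" "r' < m" "g r' = c"
    using walk_passes_separator[of m "\<lambda>v. c < v" g "\<lambda>v. v < c" c s m] g_step no_cross(2)
      cover(2) s g0 i i' by auto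
  have "idx r \<noteq> idx r'" using r r' s i unfolding idx_def by auto
  moreover have "idx r < m" "idx r' < m" using r r' s by (auto intro: idx_lt)
  ultimately show False using inj r(3) r'(3) unfolding g_def by (auto dest: inj_onD)
qed

lemma odd_cycle_in_glued_graph:
  assumes c2: "2 \<le> c" and cp: "c < p" and cyc: "has_cycle n (glued_graph n c p) m"
    and odd: "odd m"
  shows "m = Suc c"
proof -
  obtain f where m3: "3 \<le> m" and inj: "inj_on f {0..<m}"
    and edge: "\<forall>i<m. glued_graph n c p (f i) (f (Suc i mod m))"
    using cyc unfolding has_cycle_def by blast
  have next_lt: "i < m \<Longrightarrow> Suc i mod m < m" for i using m3 by simp
  consider (bip) "\<forall>i<m. c \<le> f i" | (cyc) "\<forall>i<m. f i \<le> c"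
    | (cross) "\<exists>i<m. f i < c" "\<exists>i<m. c < f i"
    by (meson not_le)
  then show ?thesis
  proof cases
    case bip
    have "(f i < p) \<noteq> (f (Suc i mod m) < p)" if "i < m" for i
    proof -
      have "c \<le> f i" "c \<le> f (Suc i mod m)" using bip that next_lt by auto
      moreover have "glued_graph n c p (f i) (f (Suc i mod m))" using edge that by simp
      ultimately show ?thesis using c2 unfolding glued_graph_defs by auto
    qed
    then have "\<forall>i<m. (f i < p) \<noteq> (f (Suc i mod m) < p)" by blast
    from closed_walk_alternating_even[of m "\<lambda>v. v < p" f, OF this] m3 have "even m" by simp
    then show ?thesis using odd by simp
  next
    case cyc
    have "cycle_block c (f i) (f (Suc i mod m))" if "i < m" for i
    proof -
      have "f i \<le> c" "f (Suc i mod m) \<le> c" using cyc that next_lt by auto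
      moreover have "glued_graph n c p (f i) (f (Suc i mod m))" using edge that by simp
      ultimately show ?thesis unfolding glued_graph_def bipartite_block_def by auto
    qed
    then have "\<forall>i<m. cycle_block c (f i) (f (Suc i mod m))" by blast
    then show ?thesis using odd_cycle_in_cycle_block[OF inj _ odd cyc] m3 by simp
  next
    case cross
    then show ?thesis using glued_graph_no_cycle_across_cut_vertex[OF inj edge] by blast
  qed
qed

lemma Clk_free_glued_graph:
  assumes "1 \<le> l" "l < k" "2 * l < p"
  shows "Clk_free l k n (glued_graph n (2 * l) p)"
  using odd_cycle_in_glued_graph[of "2 * l" p n] assms unfolding Clk_free_def by fastforce

lemma sum_interval_indicator:
  "p \<le> n \<Longrightarrow> (\<Sum>v<n. if c \<le> v \<and> v < p then x else 0) = real (p - c) * (x::real)"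
proof -
  assume "p \<le> n"
  then have "{..<n} \<inter> {v. c \<le> v \<and> v < p} = {c..<p}" by auto
  then show ?thesis by (simp add: sum.If_cases)
qed

lemma sum_upper_indicator: "(\<Sum>v<n. if p \<le> v then x else 0) = real (n - p) * (x::real)"
proof -
  have "{..<n} \<inter> {v. p \<le> v} = {p..<n}" by auto
  then show ?thesis by (simp add: sum.If_cases)
qed

lemma quad_form_eq_sum_row: "quad_form n a y = (\<Sum>i<n. y i * (\<Sum>j<n. a i j * y j))"
  unfolding quad_form_def by (simp add: sum_distrib_left mult.commute mult.left_commute)

definition step_vector :: "nat \<Rightarrow> nat \<Rightarrow> real \<Rightarrow> real \<Rightarrow> real \<Rightarrow> nat \<Rightarrow> real" where
  "step_vector c p \<alpha> \<beta> \<gamma> u = (if u = 0 then \<alpha> else if u < c then 0 else if u < p then \<beta> else \<gamma>)"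

lemma glued_graph_row_sums:
  fixes \<alpha> \<beta> \<gamma> :: real
  assumes c2: "2 \<le> c" and cp: "c < p" and pn: "p < n"
  defines "R \<equiv> \<lambda>u. \<Sum>v<n. edge_ind (glued_graph n c p) u v * step_vector c p \<alpha> \<beta> \<gamma> v"
  shows "R 0 = \<beta>" and "R c = \<alpha> + real (n - p) * \<gamma>"
    and "c < u \<Longrightarrow> u < p \<Longrightarrow> R u = real (n - p) * \<gamma>"
    and "p \<le> u \<Longrightarrow> u < n \<Longrightarrow> R u = real (p - c) * \<beta>"
proof -
  note defs = R_def edge_ind_def glued_graph_defs step_vector_def
  have "R 0 = (\<Sum>v<n. if v = c then \<beta> else 0)"
    unfolding R_def using c2 cp by (intro sum.cong refl) (auto simp: defs)
  then show "R 0 = \<beta>" using cp pn by simp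
  have "R c = (\<Sum>v<n. (if v = 0 then \<alpha> else 0) + (if p \<le> v then \<gamma> else 0))"
    unfolding R_def using c2 cp by (intro sum.cong refl) (auto simp: defs)
  then show "R c = \<alpha> + real (n - p) * \<gamma>" using pn by (simp add: sum.distrib sum_upper_indicator)
  show "R u = real (n - p) * \<gamma>" if "c < u" "u < p"
  proof -
    have "R u = (\<Sum>v<n. if p \<le> v then \<gamma> else 0)"
      unfolding R_def using that c2 cp by (intro sum.cong refl) (auto simp: defs)
    then show ?thesis by (simp add: sum_upper_indicator)
  qed
  show "R u = real (p - c) * \<beta>" if "p \<le> u" "u < n"
  proof -
    have "R u = (\<Sum>v<n. if c \<le> v \<and> v < p then \<beta> else 0)"
      unfolding R_def using that c2 cp by (intro sum.cong refl) (auto simp: defs)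
    then show ?thesis using pn by (simp add: sum_interval_indicator)
  qed
qed

lemma glued_graph_test_vector:
  assumes c2: "2 \<le> c" and cp: "c < p" and pn: "p < n"
  shows "quad_form n (edge_ind (glued_graph n c p)) (step_vector c p \<alpha> \<beta> \<gamma>)
      = 2 * \<alpha> * \<beta> + 2 * real (p - c) * real (n - p) * \<beta> * \<gamma>"
    and "sq_norm n (step_vector c p \<alpha> \<beta> \<gamma>) = \<alpha>^2 + real (p - c) * \<beta>^2 + real (n - p) * \<gamma>^2"
proof -
  let ?y = "step_vector c p \<alpha> \<beta> \<gamma>"
  note R = glued_graph_row_sums[OF c2 cp pn, where \<alpha> = \<alpha> and \<beta> = \<beta> and \<gamma> = \<gamma>]
  have "?y u * (\<Sum>v<n. edge_ind (glued_graph n c p) u v * ?y v)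
      = (if u = 0 then \<alpha> * \<beta> else 0) + (if u = c then \<alpha> * \<beta> else 0)
        + (if c \<le> u \<and> u < p then real (n - p) * \<beta> * \<gamma> else 0)
        + (if p \<le> u then real (p - c) * \<beta> * \<gamma> else 0)" if "u < n" for u
  proof -
    consider "u = 0" | "0 < u \<and> u < c" | "u = c" | "c < u \<and> u < p" | "p \<le> u" by linarith
    then show ?thesis
    proof cases
      case 3
      then show ?thesis using R(2) c2 cp by (simp add: step_vector_def[of c] distrib_left)
    next
      case 4
      then show ?thesis using R(3)[of u] by (simp add: step_vector_def[of c])
    next
      case 5
      then show ?thesis using R(4)[of u] that c2 cp by (simp add: step_vector_def[of c])
    qed (use R(1) c2 cp in \<open>simp_all add: step_vector_def[of c]\<close>)
  qed
  then have "quad_form n (edge_ind (glued_graph n c p)) ?y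
      = (\<Sum>u<n. (if u = 0 then \<alpha> * \<beta> else 0) + (if u = c then \<alpha> * \<beta> else 0)
        + (if c \<le> u \<and> u < p then real (n - p) * \<beta> * \<gamma> else 0)
        + (if p \<le> u then real (p - c) * \<beta> * \<gamma> else 0))"
    unfolding quad_form_eq_sum_row by (intro sum.cong) auto
  also have "\<dots> = 2 * \<alpha> * \<beta> + 2 * real (p - c) * real (n - p) * \<beta> * \<gamma>"
    using c2 cp pn by (simp add: sum.distrib sum_interval_indicator sum_upper_indicator)
  finally show "quad_form n (edge_ind (glued_graph n c p)) ?y
      = 2 * \<alpha> * \<beta> + 2 * real (p - c) * real (n - p) * \<beta> * \<gamma>" .
  have "(?y u)^2 = (if u = 0 then \<alpha>^2 else 0) + (if c \<le> u \<and> u < p then \<beta>^2 else 0)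
      + (if p \<le> u then \<gamma>^2 else 0)" for u
    using c2 cp by (auto simp: step_vector_def)
  then have "sq_norm n ?y = (\<Sum>u<n. (if u = 0 then \<alpha>^2 else 0)
      + (if c \<le> u \<and> u < p then \<beta>^2 else 0) + (if p \<le> u then \<gamma>^2 else 0))"
    unfolding sq_norm_def by simp
  also have "\<dots> = \<alpha>^2 + real (p - c) * \<beta>^2 + real (n - p) * \<gamma>^2"
    using c2 cp pn by (simp add: sum.distrib sum_interval_indicator sum_upper_indicator)
  finally show "sq_norm n ?y = \<alpha>^2 + real (p - c) * \<beta>^2 + real (n - p) * \<gamma>^2" .
qed

text \<open>With \<open>a = p - c\<close>, \<open>b = n - p\<close> the vector \<open>(1/\<surd>a, 0, \<dots>, 0, \<surd>b, \<dots>, \<surd>b, \<surd>a, \<dots>, \<surd>a)\<close>,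
  the Perron vector of \<open>K\<^sub>a\<^sub>,\<^sub>b\<close> extended along the edge \<open>0 c\<close>, has Rayleigh quotient above \<open>\<surd>(ab)\<close>.\<close>
lemma spec_rad_glued_graph_gt:
  assumes c2: "2 \<le> c" and cp: "c < p" and pn: "p < n"
  shows "sqrt (real (p - c) * real (n - p)) < spec_rad n (glued_graph n c p)"
proof -
  define a b where "a = real (p - c)" and "b = real (n - p)"
  have a: "1 \<le> a" and b: "1 \<le> b" unfolding a_def b_def using cp pn by auto
  define s r where "s = sqrt a" and "r = sqrt b"
  have s: "0 < s" "s^2 = a" and r: "0 < r" "r^2 = b" unfolding s_def r_def using a b by auto
  define y where "y = step_vector c p (1 / s) r s"
  have "quad_form n (edge_ind (glued_graph n c p)) y = 2 * (r / s) + 2 * a * b * r * s"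
    and norm: "sq_norm n y = 1 / a + 2 * a * b"
    using glued_graph_test_vector[OF c2 cp pn, of "1 / s" r s] s r
    unfolding y_def a_def[symmetric] b_def[symmetric]
    by (simp_all add: power_divide algebra_simps)
  moreover have "quad_form n (edge_ind (glued_graph n c p)) y
      \<le> spec_rad n (glued_graph n c p) * sq_norm n y"
    using spec_rad_quad_form_bound(2) simple_graph_glued_graph c2 cp pn by simp
  moreover have "r * s * (1 / a + 2 * a * b) < 2 * (r / s) + 2 * a * b * r * s"
    using s r by (simp add: field_simps power2_eq_square)
  moreover have "0 < 1 / a + 2 * a * b" using a b by (simp add: add_pos_pos)
  ultimately have "r * s < spec_rad n (glued_graph n c p)"
    using mult_less_cancel_right_pos by (metis norm order_less_le_trans)
  then show ?thesis unfolding r_def s_def a_def b_def by (simp add: real_sqrt_mult mult.commute)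
qed

definition is_path :: "('a \<Rightarrow> 'a \<Rightarrow> bool) \<Rightarrow> 'a set \<Rightarrow> 'a list \<Rightarrow> bool" where
  "is_path F S ps \<longleftrightarrow> distinct ps \<and> set ps \<subseteq> S \<and> successively F ps"

lemma is_path_mono: "S \<subseteq> S' \<Longrightarrow> is_path F S ps \<Longrightarrow> is_path F S' ps"
  unfolding is_path_def by auto

lemma is_path_take: "is_path F S ps \<Longrightarrow> is_path F S (take k ps)"
  unfolding is_path_def
  by (metis append_take_drop_id distinct_take order_trans set_take_subset successively_append_iff)

lemma is_path_length_le_card: "finite S \<Longrightarrow> is_path F S ps \<Longrightarrow> length ps \<le> card S"
  unfolding is_path_def by (metis card_mono distinct_card)

lemma is_path_Cons:
  "is_path F S ps \<Longrightarrow> z \<in> S \<Longrightarrow> z \<notin> set ps \<Longrightarrow> (ps \<noteq> [] \<Longrightarrow> F z (hd ps)) \<Longrightarrow>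
    is_path F S (z # ps)"
  unfolding is_path_def by (auto simp: successively_Cons)

lemma is_path_snoc:
  "is_path F S ps \<Longrightarrow> z \<in> S \<Longrightarrow> z \<notin> set ps \<Longrightarrow> (ps \<noteq> [] \<Longrightarrow> F (last ps) z) \<Longrightarrow>
    is_path F S (ps @ [z])"
  unfolding is_path_def by (auto simp: successively_append_iff)

lemma longest_path_exists:
  assumes "finite S" and "s \<in> S"
  obtains ps where "is_path F S ps" "ps \<noteq> []"
    and "\<And>qs. is_path F S qs \<Longrightarrow> length qs \<le> length ps"
proof -
  have "is_path F S [s]" using assms(2) unfolding is_path_def by simp
  moreover have "\<forall>qs. is_path F S qs \<longrightarrow> length qs < Suc (card S)"
    using is_path_length_le_card[OF assms(1)] by (simp add: le_imp_less_Suc)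
  ultimately obtain ps where "is_path F S ps" "\<forall>qs. is_path F S qs \<longrightarrow> length qs \<le> length ps"
    using ex_has_greatest_nat[of "is_path F S" "[s]" length] by blast
  moreover then have "ps \<noteq> []" using \<open>is_path F S [s]\<close> by force
  ultimately show ?thesis using that by blast
qed

definition closed_path :: "('a \<Rightarrow> 'a \<Rightarrow> bool) \<Rightarrow> 'a set \<Rightarrow> 'a list \<Rightarrow> bool" where
  "closed_path F S cs \<longleftrightarrow> is_path F S cs \<and> cs \<noteq> [] \<and> F (last cs) (hd cs)"

lemma closed_path_rotate1: "closed_path F S cs \<Longrightarrow> closed_path F S (rotate1 cs)"
proof (cases cs)
  case (Cons a xs)
  then show "closed_path F S cs \<Longrightarrow> closed_path F S (rotate1 cs)"
    unfolding closed_path_def is_path_def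
    by (cases xs) (auto simp: successively_append_iff successively_Cons hd_append split: if_splits)
qed simp

lemma closed_path_rotate: "closed_path F S cs \<Longrightarrow> closed_path F S (rotate j cs)"
  by (induction j) (simp_all add: closed_path_rotate1)

text \<open>Posa's rotation: a path \<open>v\<^sub>0 \<dots> v\<^sub>p\<^sub>-\<^sub>1\<close> with \<open>v\<^sub>0 \<sim> v\<^sub>i\<^sub>+\<^sub>1\<close> and \<open>v\<^sub>p\<^sub>-\<^sub>1 \<sim> v\<^sub>i\<close> closes up to
  the cycle \<open>v\<^sub>0 \<dots> v\<^sub>i v\<^sub>p\<^sub>-\<^sub>1 \<dots> v\<^sub>i\<^sub>+\<^sub>1\<close> on the same vertices.\<close>
lemma path_crossing_endpoints_closes:
  assumes sym: "\<And>a b. F a b \<Longrightarrow> F b a" and path: "is_path F S ps" and i: "Suc i < length ps"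
    and first: "F (hd ps) (ps ! Suc i)" and last: "F (last ps) (ps ! i)"
  shows "closed_path F S (take (Suc i) ps @ rev (drop (Suc i) ps))"
proof -
  define cs where "cs = take (Suc i) ps @ rev (drop (Suc i) ps)"
  have parts: "successively F (take (Suc i) ps)" "successively F (drop (Suc i) ps)"
    using path unfolding is_path_def by (metis append_take_drop_id successively_append_iff)+
  have "successively F (rev (drop (Suc i) ps))"
    using successively_mono[OF parts(2), of "\<lambda>x y. F y x"] sym by simp
  moreover have "last (take (Suc i) ps) = ps ! i" using i by (simp add: take_Suc_conv_app_nth)
  moreover have "last (drop (Suc i) ps) = last ps" using i by simp
  ultimately have "successively F cs"
    using parts(1) last sym i unfolding cs_def by (simp add: successively_append_iff hd_rev)
  moreover have "hd cs = hd ps" "last cs = ps ! Suc i"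
    using i unfolding cs_def by (simp_all add: hd_append last_rev hd_drop_conv_nth)
  then have "F (last cs) (hd cs)" using sym[OF first] by simp
  moreover have "distinct cs"
    using path unfolding is_path_def cs_def by (simp add: set_take_disj_set_drop_if_distinct)
  moreover have "set cs = set ps"
    unfolding cs_def by (metis append_take_drop_id set_append set_rev)
  moreover have "cs \<noteq> []" using i unfolding cs_def by simp
  ultimately show ?thesis
    using path unfolding closed_path_def is_path_def cs_def[symmetric] by simp
qed

text \<open>Opening the cycle at \<open>w\<close> and prepending \<open>z\<close> would give a longer path.\<close>
lemma longest_path_closed_no_exit:
  assumes sym: "\<And>a b. F a b \<Longrightarrow> F b a" and longest: "\<And>qs. is_path F S qs \<Longrightarrow> length qs \<le> length ps"
    and cyc: "closed_path F S cs" and set_cs: "set cs = set ps" and "distinct ps"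
    and w: "w \<in> set ps" and z: "z \<in> S - set ps"
  shows "\<not> F w z"
proof
  assume "F w z"
  obtain j where j: "j < length cs" "cs ! j = w" using w set_cs by (metis in_set_conv_nth)
  have rot: "closed_path F S (rotate j cs)" using closed_path_rotate[OF cyc] .
  have "hd (rotate j cs) = w"
  proof -
    have "cs \<noteq> []" using j(1) by auto
    then show ?thesis using j hd_conv_nth[of "rotate j cs"] nth_rotate[of 0 cs j] by simp
  qed
  then have "is_path F S (z # rotate j cs)"
    using rot z set_cs \<open>F w z\<close> sym unfolding closed_path_def by (auto intro!: is_path_Cons)
  then have "Suc (length cs) \<le> length ps" using longest by fastforce
  moreover have "length cs = length ps"
    using cyc set_cs \<open>distinct ps\<close> unfolding closed_path_def is_path_def
    by (metis distinct_card)
  ultimately show False by simp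
qed

lemma degree_sum_remove_vertex:
  assumes fin: "finite S" and u: "u \<in> S" and sym: "\<And>a b. F a b \<Longrightarrow> F b a" and irr: "\<And>a. \<not> F a a"
  shows "(\<Sum>w\<in>S. card {z\<in>S. F w z}) = 2 * card {z\<in>S. F u z} + (\<Sum>w\<in>S-{u}. card {z\<in>S-{u}. F w z})"
proof -
  have "card {z\<in>S. F w z} = card {z\<in>S-{u}. F w z} + (if F w u then 1 else 0)" if "w \<in> S - {u}" for w
  proof -
    have "{z\<in>S. F w z} = (if F w u then insert u {z\<in>S-{u}. F w z} else {z\<in>S-{u}. F w z})"
      using u by auto
    then show ?thesis using fin by simp
  qed
  then have "(\<Sum>w\<in>S-{u}. card {z\<in>S. F w z})
      = (\<Sum>w\<in>S-{u}. card {z\<in>S-{u}. F w z}) + card {w\<in>S-{u}. F w u}"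
    using fin by (simp add: sum.distrib sum.inter_filter[symmetric])
  also have "{w\<in>S-{u}. F w u} = {z\<in>S. F u z}" using sym irr by blast
  finally show ?thesis using sum.remove[OF fin u, of "\<lambda>w. card {z\<in>S. F w z}"] by simp
qed

lemma degree_sum_split_closed:
  assumes fin: "finite S" and T: "T \<subseteq> S" and no_exit: "\<forall>w\<in>T. \<forall>z\<in>S-T. \<not> F w z"
    and sym: "\<And>a b. F a b \<Longrightarrow> F b a"
  shows "(\<Sum>w\<in>S. card {z\<in>S. F w z}) = (\<Sum>w\<in>T. card {z\<in>T. F w z}) + (\<Sum>w\<in>S-T. card {z\<in>S-T. F w z})"
proof -
  have "{z\<in>S. F w z} = {z\<in>T. F w z}" if "w \<in> T" for w using that no_exit T by blast
  moreover have "{z\<in>S. F w z} = {z\<in>S-T. F w z}" if "w \<in> S - T" for w using that no_exit sym by blast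
  ultimately show ?thesis
    using sum.subset_diff[OF T fin, of "\<lambda>w. card {z\<in>S. F w z}"] by simp
qed

lemma longest_path_endpoint_degrees:
  assumes sym: "\<And>a b. F a b \<Longrightarrow> F b a" and irr: "\<And>a. \<not> F a a"
    and path: "is_path F S ps" "ps \<noteq> []"
    and longest: "\<And>qs. is_path F S qs \<Longrightarrow> length qs \<le> length ps"
  shows "card {z\<in>S. F (hd ps) z} \<le> card {i. Suc i < length ps \<and> F (hd ps) (ps ! Suc i)}"
    and "card {z\<in>S. F (last ps) z} \<le> card {i. Suc i < length ps \<and> F (last ps) (ps ! i)}"
proof -
  have "z \<in> set ps" if "z \<in> S" "F v z" "v = hd ps \<or> v = last ps" for v z
  proof (rule ccontr)
    assume "z \<notin> set ps"
    then have "is_path F S (z # ps) \<or> is_path F S (ps @ [z])"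
      using that path sym by (auto intro: is_path_Cons is_path_snoc)
    then show False using longest by fastforce
  qed
  then have on_path: "\<exists>k<length ps. z = ps ! k" if "z \<in> S" "F v z" "v = hd ps \<or> v = last ps" for v z
    using that by (metis in_set_conv_nth)
  have "{z\<in>S. F (hd ps) z} \<subseteq> (\<lambda>i. ps ! Suc i) ` {i. Suc i < length ps \<and> F (hd ps) (ps ! Suc i)}"
  proof
    fix z assume z: "z \<in> {z\<in>S. F (hd ps) z}"
    then obtain k where k: "k < length ps" "z = ps ! k" using on_path by blast
    moreover have "k \<noteq> 0"
    proof
      assume "k = 0"
      then show False using z k irr path(2) by (simp add: hd_conv_nth)
    qed
    ultimately show "z \<in> (\<lambda>i. ps ! Suc i) ` {i. Suc i < length ps \<and> F (hd ps) (ps ! Suc i)}"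
      using z by (intro image_eqI[of _ _ "k - 1"]) auto
  qed
  then show "card {z\<in>S. F (hd ps) z} \<le> card {i. Suc i < length ps \<and> F (hd ps) (ps ! Suc i)}"
    by (rule surj_card_le[rotated]) (auto intro: finite_subset[of _ "{..<length ps}"])
  have "{z\<in>S. F (last ps) z} \<subseteq> (\<lambda>i. ps ! i) ` {i. Suc i < length ps \<and> F (last ps) (ps ! i)}"
  proof
    fix z assume z: "z \<in> {z\<in>S. F (last ps) z}"
    then obtain k where k: "k < length ps" "z = ps ! k" using on_path by blast
    moreover have "k \<noteq> length ps - 1"
    proof
      assume "k = length ps - 1"
      then show False using z k irr path(2) by (simp add: last_conv_nth)
    qed
    ultimately show "z \<in> (\<lambda>i. ps ! i) ` {i. Suc i < length ps \<and> F (last ps) (ps ! i)}"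
      using z by auto
  qed
  then show "card {z\<in>S. F (last ps) z} \<le> card {i. Suc i < length ps \<and> F (last ps) (ps ! i)}"
    by (rule surj_card_le[rotated]) (auto intro: finite_subset[of _ "{..<length ps}"])
qed

text \<open>If the index sets \<open>X\<close>, \<open>Y\<close> of the endpoints' neighbours are disjoint, their sizes add up
  to at most \<open>p - 1\<close>; otherwise Posa's rotation closes the path.\<close>
lemma longest_path_dichotomy:
  assumes sym: "\<And>a b. F a b \<Longrightarrow> F b a" and irr: "\<And>a. \<not> F a a"
    and path: "is_path F S ps" "ps \<noteq> []"
    and longest: "\<And>qs. is_path F S qs \<Longrightarrow> length qs \<le> length ps"
  shows "(\<exists>u\<in>S. 2 * card {z\<in>S. F u z} \<le> length ps - 1) \<or> (\<forall>w\<in>set ps. \<forall>z\<in>S - set ps. \<not> F w z)"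
proof -
  define X where "X = {i. Suc i < length ps \<and> F (hd ps) (ps ! Suc i)}"
  define Y where "Y = {i. Suc i < length ps \<and> F (last ps) (ps ! i)}"
  note degrees = longest_path_endpoint_degrees[OF sym irr path longest, folded X_def Y_def]
  show ?thesis
  proof (cases "X \<inter> Y = {}")
    case True
    have XY: "X \<union> Y \<subseteq> {..<length ps - 1}" unfolding X_def Y_def by auto
    then have "card X + card Y \<le> length ps - 1"
      using card_Un_disjoint[of X Y] card_mono[OF _ XY] True finite_subset[OF XY] by simp
    moreover have "hd ps \<in> S" "last ps \<in> S" using path unfolding is_path_def by auto
    ultimately show ?thesis
      using degrees by (cases "card {z\<in>S. F (hd ps) z} \<le> card {z\<in>S. F (last ps) z}") force+
  next
    case False
    then obtain i where "i \<in> X" "i \<in> Y" by blast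
    then have closed: "closed_path F S (take (Suc i) ps @ rev (drop (Suc i) ps))"
      using path_crossing_endpoints_closes[OF sym path(1)] unfolding X_def Y_def by blast
    have same_set: "set (take (Suc i) ps @ rev (drop (Suc i) ps)) = set ps"
      by (metis append_take_drop_id set_append set_rev)
    have "\<not> F w z" if "w \<in> set ps" "z \<in> S - set ps" for w z
      using longest_path_closed_no_exit[OF sym longest closed same_set _ that] path(1)
      unfolding is_path_def by simp
    then show ?thesis by blast
  qed
qed

lemma degree_sum_le_card_mult:
  assumes "finite T" and irr: "\<And>a. \<not> F a a"
  shows "(\<Sum>w\<in>T. card {z\<in>T. F w z}) \<le> card T * (card T - 1)"
proof -
  have "card {z\<in>T. F w z} \<le> card T - 1" if "w \<in> T" for w
  proof -
    have "{z\<in>T. F w z} \<subseteq> T - {w}" using irr by auto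
    then show ?thesis using card_mono[of "T - {w}"] assms(1) that by fastforce
  qed
  then show ?thesis using sum_bounded_above[of T _ "card T - 1"] by simp
qed

text \<open>Erdos--Gallai, by induction on \<open>|S|\<close>: delete either a low-degree endpoint of a longest
  path, or the vertex set of a longest path that closes up to a cycle and is therefore a union of
  components.\<close>
theorem erdos_gallai_degree_sum:
  assumes sym: "\<And>a b. F a b \<Longrightarrow> F b a" and irr: "\<And>a. \<not> F a a"
    and "finite S" and no_path: "\<not> (\<exists>ps. is_path F S ps \<and> length ps = t)"
  shows "(\<Sum>w\<in>S. card {z\<in>S. F w z}) \<le> (t - 2) * card S"
  using assms(3,4)
proof (induction "card S" arbitrary: S rule: less_induct)
  case less
  note fin = less.prems(1)
  show ?case
  proof (cases "S = {}")
    case False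
    then obtain s where "s \<in> S" by blast
    then obtain ps where path: "is_path F S ps" "ps \<noteq> []"
      and longest: "\<And>qs. is_path F S qs \<Longrightarrow> length qs \<le> length ps"
      using longest_path_exists[OF fin] by metis
    have "length ps < t"
      using less.prems(2) is_path_take[OF path(1), of t] by (metis length_take min.absorb2 not_le)
    have IH: "(\<Sum>w\<in>S - T. card {z\<in>S - T. F w z}) \<le> (t - 2) * card (S - T)"
      if "T \<subseteq> S" "T \<noteq> {}" for T
    proof (rule less.hyps)
      show "card (S - T) < card S" using that fin by (intro psubset_card_mono) auto
      show "\<not> (\<exists>ps. is_path F (S - T) ps \<and> length ps = t)"
        using less.prems(2) is_path_mono[of "S - T" S F] by blast
    qed (use fin in simp)
    consider (endpoint) u where "u \<in> S" "2 * card {z\<in>S. F u z} \<le> length ps - 1"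
      | (closed) "\<forall>w\<in>set ps. \<forall>z\<in>S - set ps. \<not> F w z"
      using longest_path_dichotomy[OF sym irr path longest] by blast
    then show ?thesis
    proof cases
      case endpoint
      have "(\<Sum>w\<in>S. card {z\<in>S. F w z})
          = 2 * card {z\<in>S. F u z} + (\<Sum>w\<in>S-{u}. card {z\<in>S-{u}. F w z})"
        by (rule degree_sum_remove_vertex[where F = F, OF fin endpoint(1) sym irr])
      also have "\<dots> \<le> (t - 2) + (t - 2) * card (S - {u})"
        using endpoint(2) \<open>length ps < t\<close> IH[of "{u}"] endpoint(1) by (intro add_mono) auto
      also have "\<dots> = (t - 2) * card S"
        using card_Suc_Diff1[OF fin endpoint(1)] by (metis mult_Suc_right)
      finally show ?thesis .
    next
      case closed
      have T: "set ps \<subseteq> S" "card (set ps) = length ps"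
        using path(1) unfolding is_path_def by (auto simp: distinct_card)
      have "(\<Sum>w\<in>set ps. card {z\<in>set ps. F w z}) \<le> card (set ps) * (card (set ps) - 1)"
        using degree_sum_le_card_mult[of "set ps" F] irr by simp
      also have "\<dots> = (length ps - 1) * card (set ps)" using T(2) by (simp add: mult.commute)
      also have "\<dots> \<le> (t - 2) * card (set ps)"
        using \<open>length ps < t\<close> by (intro mult_right_mono) auto
      finally have inside: "(\<Sum>w\<in>set ps. card {z\<in>set ps. F w z}) \<le> (t - 2) * card (set ps)" .
      have card_S: "card S = card (set ps) + card (S - set ps)"
        using card_Diff_subset[OF _ T(1)] card_mono[OF fin T(1)] by simp
      have "(\<Sum>w\<in>S. card {z\<in>S. F w z})
          = (\<Sum>w\<in>set ps. card {z\<in>set ps. F w z}) + (\<Sum>w\<in>S - set ps. card {z\<in>S - set ps. F w z})"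
        by (rule degree_sum_split_closed[where F = F, OF fin T(1) closed sym])
      also have "\<dots> \<le> (t - 2) * card (set ps) + (t - 2) * card (S - set ps)"
        using inside IH[of "set ps"] T(1) path(2) by (intro add_mono) auto
      also have "\<dots> = (t - 2) * card S"
        unfolding card_S by (simp only: add_mult_distrib2)
      finally show ?thesis .
    qed
  qed simp
qed

lemma real_card_filter_eq_sum:
  "finite A \<Longrightarrow> real (card {x\<in>A. P x}) = (\<Sum>x\<in>A. if P x then 1 else 0)"
  using sum.inter_filter[of A "\<lambda>_. (1::real)" P] by simp

lemma sum_edge_ind_eq_twice_num_edges:
  assumes "simple_graph n E"
  shows "(\<Sum>u<n. \<Sum>w<n. edge_ind E u w) = 2 * real (num_edges n E)"
proof -
  have pairs: "{(u, v). u < v \<and> v < n \<and> E u v} = Sigma {..<n} (\<lambda>u. {v\<in>{..<n}. u < v \<and> E u v})"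
    by auto
  have "real (num_edges n E) = (\<Sum>u<n. real (card {v\<in>{..<n}. u < v \<and> E u v}))"
    unfolding num_edges_def pairs by (subst card_SigmaI) auto
  also have "\<dots> = (\<Sum>u<n. \<Sum>w<n. if u < w \<and> E u w then 1 else 0)"
    by (intro sum.cong refl real_card_filter_eq_sum) auto
  finally have upper: "real (num_edges n E) = (\<Sum>u<n. \<Sum>w<n. if u < w \<and> E u w then 1 else 0)" .
  have "edge_ind E u w = (if u < w \<and> E u w then 1 else 0) + (if w < u \<and> E w u then 1 else 0)" for u w
    using assms unfolding edge_ind_def simple_graph_def by (auto simp: linorder_neq_iff)
  then have "(\<Sum>u<n. \<Sum>w<n. edge_ind E u w) = (\<Sum>u<n. \<Sum>w<n. if u < w \<and> E u w then 1 else 0)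
      + (\<Sum>u<n. \<Sum>w<n. if w < u \<and> E w u then 1 else 0)"
    by (simp add: sum.distrib)
  also have "(\<Sum>u<n. \<Sum>w<n. if w < u \<and> E w u then 1 else (0::real))
      = (\<Sum>u<n. \<Sum>w<n. if u < w \<and> E u w then 1 else 0)"
    by (rule sum.swap)
  finally show ?thesis using upper by simp
qed

definition nbhd :: "nat \<Rightarrow> (nat \<Rightarrow> nat \<Rightarrow> bool) \<Rightarrow> nat \<Rightarrow> nat set" where
  "nbhd n E z = {v\<in>{..<n}. E z v}"

lemma sum_edge_ind_mult_eq_sum_nbhd:
  "(\<Sum>v<n. edge_ind E u v * f v) = (\<Sum>v\<in>nbhd n E u. f v)"
proof -
  have "(\<Sum>v<n. edge_ind E u v * f v) = (\<Sum>v<n. if E u v then f v else 0)"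
    by (intro sum.cong) (auto simp: edge_ind_def)
  also have "\<dots> = (\<Sum>v\<in>nbhd n E u. f v)"
    unfolding nbhd_def by (rule sum.inter_filter[symmetric]) simp
  finally show ?thesis .
qed

lemma sum_edge_ind_triangles_at:
  "(\<Sum>u<n. \<Sum>w<n. edge_ind E u w * edge_ind E z u * edge_ind E z w)
    = real (\<Sum>u\<in>nbhd n E z. card {w\<in>nbhd n E z. E u w})"
proof -
  have inner: "(\<Sum>w<n. edge_ind E u w * edge_ind E z u * edge_ind E z w)
      = edge_ind E z u * real (card {w\<in>nbhd n E z. E u w})" for u
  proof -
    have "{w\<in>nbhd n E z. E u w} = {w\<in>{..<n}. E z w \<and> E u w}" unfolding nbhd_def by auto
    moreover have "(\<Sum>w<n. edge_ind E u w * edge_ind E z u * edge_ind E z w)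
        = edge_ind E z u * (\<Sum>w<n. if E z w \<and> E u w then 1 else 0)"
      unfolding sum_distrib_left by (intro sum.cong refl) (simp add: edge_ind_def)
    ultimately show ?thesis
      using real_card_filter_eq_sum[of "{..<n}" "\<lambda>w. E z w \<and> E u w"] by simp
  qed
  have "(\<Sum>u<n. \<Sum>w<n. edge_ind E u w * edge_ind E z u * edge_ind E z w)
      = (\<Sum>u<n. if E z u then real (card {w\<in>nbhd n E z. E u w}) else 0)"
    unfolding inner by (intro sum.cong refl) (simp add: edge_ind_def)
  also have "\<dots> = (\<Sum>u\<in>nbhd n E z. real (card {w\<in>nbhd n E z. E u w}))"
    unfolding nbhd_def by (rule sum.inter_filter[symmetric]) simp
  finally show ?thesis by simp
qed

text \<open>An edge \<open>uw\<close> contributes \<open>[z \<sim> u] + [z \<sim> w] \<le> 1 + [z \<sim> u][z \<sim> w]\<close> to the degree sum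
  over the neighbours of \<open>z\<close>.\<close>
lemma sum_neighbour_degrees_le:
  assumes "simple_graph n E"
  shows "2 * (\<Sum>u<n. edge_ind E z u * (\<Sum>w<n. edge_ind E u w))
    \<le> 2 * real (num_edges n E) + real (\<Sum>u\<in>nbhd n E z. card {w\<in>nbhd n E z. E u w})"
proof -
  have "(\<Sum>u<n. edge_ind E z u * (\<Sum>w<n. edge_ind E u w)) = (\<Sum>u<n. \<Sum>w<n. edge_ind E u w * edge_ind E z u)"
    by (simp add: sum_distrib_left mult.commute)
  moreover have "\<dots> = (\<Sum>u<n. \<Sum>w<n. edge_ind E u w * edge_ind E z w)"
    using edge_ind_sym[OF assms] by (subst sum.swap) simp
  ultimately have "2 * (\<Sum>u<n. edge_ind E z u * (\<Sum>w<n. edge_ind E u w))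
      = (\<Sum>u<n. \<Sum>w<n. edge_ind E u w * (edge_ind E z u + edge_ind E z w))"
    by (simp add: sum.distrib distrib_left)
  also have "\<dots> \<le> (\<Sum>u<n. \<Sum>w<n. edge_ind E u w + edge_ind E u w * edge_ind E z u * edge_ind E z w)"
    by (intro sum_mono) (simp add: edge_ind_def)
  also have "\<dots> = 2 * real (num_edges n E) + real (\<Sum>u\<in>nbhd n E z. card {w\<in>nbhd n E z. E u w})"
    by (simp add: sum.distrib sum_edge_ind_eq_twice_num_edges[OF assms] sum_edge_ind_triangles_at)
  finally show ?thesis .
qed

text \<open>Cauchy--Schwarz on the eigenvalue equation at \<open>u\<close> gives
  \<open>\<mu>\<^sup>2 x\<^sub>u\<^sup>2 \<le> d(u) \<Sum>\<^bsub>v \<sim> u\<^esub> x\<^sub>v\<^sup>2\<close>; summing over \<open>u\<close> and regrouping by \<open>v\<close> leaves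
  \<open>\<Sum>\<^sub>v x\<^sub>v\<^sup>2 \<Sum>\<^bsub>u \<sim> v\<^esub> d(u)\<close>.\<close>
lemma eigenvalue_sq_le_num_edges_plus:
  assumes sg: "simple_graph n E"
    and ev: "\<forall>u<n. (\<Sum>v<n. edge_ind E u v * x v) = \<mu> * x u" and nz: "\<exists>i<n. x i \<noteq> 0"
    and B: "\<And>z. z < n \<Longrightarrow> real (\<Sum>u\<in>nbhd n E z. card {w\<in>nbhd n E z. E u w}) \<le> B"
  shows "\<mu>^2 \<le> real (num_edges n E) + B / 2"
proof -
  define deg where "deg u = (\<Sum>w<n. edge_ind E u w)" for u
  note sum_nbhd = sum_edge_ind_mult_eq_sum_nbhd[where n = n and E = E]
  have deg: "deg u = real (card (nbhd n E u))" for u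
    using sum_nbhd[of u "\<lambda>_. 1"] unfolding deg_def by simp
  have cs: "(\<mu> * x u)^2 \<le> deg u * (\<Sum>v<n. edge_ind E u v * (x v)^2)" if "u < n" for u
    using ev that square_sum_le_card_mult_sum_squares[of "nbhd n E u" x]
    unfolding sum_nbhd deg by (simp add: nbhd_def sum_nbhd[of u x, symmetric])
  have "\<mu>^2 * (\<Sum>u<n. (x u)^2) = (\<Sum>u<n. (\<mu> * x u)^2)"
    by (simp add: sum_distrib_left power_mult_distrib)
  also have "\<dots> \<le> (\<Sum>u<n. deg u * (\<Sum>v<n. edge_ind E u v * (x v)^2))"
    using cs by (intro sum_mono) auto
  also have "\<dots> = (\<Sum>v<n. \<Sum>u<n. deg u * edge_ind E u v * (x v)^2)"
    by (subst sum.swap) (simp add: sum_distrib_left mult.assoc)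
  also have "\<dots> = (\<Sum>v<n. (x v)^2 * (\<Sum>u<n. edge_ind E v u * deg u))"
  proof (intro sum.cong refl)
    fix v
    have "deg u * edge_ind E u v * (x v)^2 = (x v)^2 * (edge_ind E v u * deg u)" for u
      using edge_ind_sym[OF sg, of u v] by simp
    then show "(\<Sum>u<n. deg u * edge_ind E u v * (x v)^2) = (x v)^2 * (\<Sum>u<n. edge_ind E v u * deg u)"
      unfolding sum_distrib_left by (intro sum.cong refl)
  qed
  also have "\<dots> \<le> (\<Sum>v<n. (x v)^2 * (real (num_edges n E) + B / 2))"
  proof (intro sum_mono mult_left_mono)
    fix v assume "v \<in> {..<n}"
    then show "(\<Sum>u<n. edge_ind E v u * deg u) \<le> real (num_edges n E) + B / 2"
      using sum_neighbour_degrees_le[OF sg, of v] B[of v] unfolding deg_def by simp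
  qed simp
  also have "\<dots> = (\<Sum>v<n. (x v)^2) * (real (num_edges n E) + B / 2)"
    by (rule sum_distrib_right[symmetric])
  finally have "(\<Sum>u<n. (x u)^2) * \<mu>^2 \<le> (\<Sum>u<n. (x u)^2) * (real (num_edges n E) + B / 2)"
    by (simp only: mult.commute)
  moreover have "0 < (\<Sum>u<n. (x u)^2)"
    using nz sq_norm_eq_0_iff[of n x] sq_norm_nonneg[of n x] unfolding sq_norm_def by auto
  ultimately show ?thesis by simp
qed

lemma has_cycle_if_closed_path:
  assumes "closed_path E {..<n} cs" and "3 \<le> length cs"
  shows "has_cycle n E (length cs)"
proof -
  have path: "distinct cs" "set cs \<subseteq> {..<n}" "successively E cs" "E (last cs) (hd cs)"
    using assms(1) unfolding closed_path_def is_path_def by auto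
  have "E (cs ! i) (cs ! (Suc i mod length cs))" if "i < length cs" for i
  proof (cases "Suc i < length cs")
    case True
    then show ?thesis using successively_nth[OF path(3)] by simp
  next
    case False
    then have "i = length cs - 1" using that by simp
    moreover have "cs \<noteq> []" using assms(2) by auto
    ultimately have "cs ! i = last cs" "cs ! (Suc i mod length cs) = hd cs"
      by (simp_all add: last_conv_nth hd_conv_nth)
    then show ?thesis using path(4) by simp
  qed
  moreover have "inj_on ((!) cs) {0..<length cs}"
    using path(1) by (simp add: inj_on_def nth_eq_iff_index_eq)
  moreover have "(!) cs ` {0..<length cs} \<subseteq> {0..<n}"
    using path(2) by (auto simp: lessThan_atLeast0)
  ultimately show ?thesis
    unfolding has_cycle_def using assms(2) by blast
qed

lemma closed_path_through_nbhd:
  assumes sg: "simple_graph n E" and z: "z < n"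
    and ps: "is_path E (nbhd n E z) ps" "ps \<noteq> []"
  shows "closed_path E {..<n} (z # ps)"
proof -
  have "hd ps \<in> nbhd n E z" "last ps \<in> nbhd n E z"
    using ps unfolding is_path_def by auto
  moreover have "z \<notin> set ps" using ps(1) sg unfolding is_path_def nbhd_def simple_graph_def by auto
  moreover have "is_path E {..<n} ps"
    using ps(1) by (rule is_path_mono[rotated]) (auto simp: nbhd_def)
  ultimately have "is_path E {..<n} (z # ps)" and "E (last ps) z"
    using z sg by (auto intro!: is_path_Cons simp: nbhd_def simple_graph_def)
  then show ?thesis using ps(2) unfolding closed_path_def by simp
qed

text \<open>A path on \<open>2 k\<close> vertices in the neighbourhood of \<open>z\<close> closes through \<open>z\<close> to a
  \<open>C\<^sub>2\<^sub>k\<^sub>+\<^sub>1\<close>, so Erdos--Gallai applies inside the neighbourhood.\<close>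
lemma nbhd_degree_sum_le:
  assumes sg: "simple_graph n E" and no_cycle: "\<not> has_cycle n E (2 * k + 1)"
    and k: "1 \<le> k" and z: "z < n"
  shows "(\<Sum>u\<in>nbhd n E z. card {w\<in>nbhd n E z. E u w}) \<le> (2 * k - 2) * (n - 1)"
proof -
  have sym: "\<And>a b. E a b \<Longrightarrow> E b a" and irr: "\<And>a. \<not> E a a"
    using sg unfolding simple_graph_def by auto
  have no_path: "\<not> (\<exists>ps. is_path E (nbhd n E z) ps \<and> length ps = 2 * k)"
  proof
    assume "\<exists>ps. is_path E (nbhd n E z) ps \<and> length ps = 2 * k"
    then obtain ps where ps: "is_path E (nbhd n E z) ps" "length ps = 2 * k" by blast
    moreover have "ps \<noteq> []" using ps(2) k by auto
    ultimately have "closed_path E {..<n} (z # ps)"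
      using closed_path_through_nbhd[OF sg z] by blast
    then show False
      using has_cycle_if_closed_path[of E n "z # ps"] no_cycle ps(2) k by simp
  qed
  have "card (nbhd n E z) \<le> n - 1"
    using card_mono[of "{..<n} - {z}" "nbhd n E z"] irr z unfolding nbhd_def by fastforce
  then have "(2 * k - 2) * card (nbhd n E z) \<le> (2 * k - 2) * (n - 1)" by simp
  moreover have "finite (nbhd n E z)" unfolding nbhd_def by simp
  ultimately show ?thesis
    using erdos_gallai_degree_sum[of E "nbhd n E z" "2 * k", OF sym irr _ no_path] le_trans
    by blast
qed

lemma spec_rad_sq_le_num_edges:
  assumes sg: "simple_graph n E" and n: "0 < n"
    and no_cycle: "\<not> has_cycle n E (2 * k + 1)" and k: "1 \<le> k"
  shows "(spec_rad n E)^2 \<le> real (num_edges n E) + (real k - 1) * (real n - 1)"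
proof -
  obtain x where "\<exists>i<n. x i \<noteq> 0" "\<forall>u<n. (\<Sum>v<n. edge_ind E u v * x v) = spec_rad n E * x u"
    using spec_rad_quad_form_bound(1)[OF n sg] eigenvalue_adj_mat_iff by blast
  moreover have "real (\<Sum>u\<in>nbhd n E z. card {w\<in>nbhd n E z. E u w}) \<le> real ((2 * k - 2) * (n - 1))"
    if "z < n" for z
    using nbhd_degree_sum_le[OF sg no_cycle k that] by linarith
  ultimately have "(spec_rad n E)^2 \<le> real (num_edges n E) + real ((2 * k - 2) * (n - 1)) / 2"
    by (intro eigenvalue_sq_le_num_edges_plus[OF sg]) auto
  moreover have "(2 * real k - 2) * (real n - 1) / 2 = (real k - 1) * (real n - 1)"
    by (simp add: field_simps)
  ultimately show ?thesis using k n by (simp add: of_nat_diff)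
qed

lemma extremal_spec_rad_gt:
  assumes l: "1 \<le> l" "l < k" and n: "2 * k \<le> n" and ext: "extremal l k n E"
  defines "m \<equiv> n - 2 * l"
  shows "sqrt (real (m div 2) * real (m - m div 2)) < spec_rad n E"
proof -
  define c p where "c = 2 * l" and "p = 2 * l + m div 2"
  have c: "2 \<le> c" "c < p" "p < n" and "p - c = m div 2" "n - p = m - m div 2"
    using l n unfolding c_def p_def m_def by auto
  then have "sqrt (real (m div 2) * real (m - m div 2)) < spec_rad n (glued_graph n c p)"
    using spec_rad_glued_graph_gt[OF c] by simp
  also have "\<dots> \<le> spec_rad n E"
    using ext simple_graph_glued_graph[of c n p] not_bipartite_glued_graph[of c n p]
      Clk_free_glued_graph[OF l, of p n] c
    unfolding extremal_def c_def by simp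
  finally show ?thesis .
qed

lemma square_le_four_floor_half_mul_ceil_half:
  "real m * real m - 1 \<le> 4 * (real (m div 2) * real (m - m div 2))"
proof (cases "even m")
  case True
  then have "m - m div 2 = m div 2" "real m = 2 * real (m div 2)" by auto
  then show ?thesis by simp
next
  case False
  then have "m - m div 2 = m div 2 + 1" "real m = 2 * real (m div 2) + 1"
    by (auto elim: oddE)
  then show ?thesis by (simp add: algebra_simps)
qed

lemma extremal_spec_rad_sq_gt:
  assumes "1 \<le> l" "l < k" and "2 * k \<le> n" and "extremal l k n E"
  defines "m \<equiv> n - 2 * l"
  shows "real m * real m - 1 < 4 * (spec_rad n E)^2"
proof -
  have "sqrt (real (m div 2) * real (m - m div 2)) < spec_rad n E"
    using extremal_spec_rad_gt[OF assms(1-4)] unfolding m_def .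
  then have "(sqrt (real (m div 2) * real (m - m div 2)))^2 < (spec_rad n E)^2"
    by (intro power_strict_mono) auto
  then show ?thesis using square_le_four_floor_half_mul_ceil_half[of m] by simp
qed

lemma extremal_num_edges_ge:
  assumes l: "1 \<le> l" "l < k" and n: "2 * k \<le> n" and ext: "extremal l k n E"
  shows "(real n)^2 / 4 - real k * real n + real k \<le> real (num_edges n E)"
proof -
  define m where "m = n - 2 * l"
  have sg: "simple_graph n E" and clk: "Clk_free l k n E"
    using ext unfolding extremal_def by auto
  have lower: "real m * real m - 1 < 4 * (spec_rad n E)^2"
    using extremal_spec_rad_sq_gt[OF l n ext] unfolding m_def .
  show ?thesis
  proof (cases "l = 1")
    case True
    then have "(spec_rad n E)^2 \<le> real (num_edges n E) + (real k - 1) * (real n - 1)"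
      using spec_rad_sq_le_num_edges[OF sg, of k] clk l n unfolding Clk_free_def by simp
    moreover have "real m = real n - 2" using True n l unfolding m_def by simp
    then have "real m * real m = (real n)^2 - 4 * real n + 4"
      by (simp only:) (simp add: power2_eq_square algebra_simps)
    moreover have "(real k - 1) * (real n - 1) = real k * real n - real k - real n + 1"
      by (simp add: algebra_simps)
    ultimately have "(real n)^2 - 4 * real k * real n + 4 * real k - 1 < 4 * real (num_edges n E)"
      using lower by linarith
    then have "int n ^ 2 - 4 * int k * int n + 4 * int k - 1 < int (4 * num_edges n E)"
      by (simp only: of_int_less_iff[where 'a = real, symmetric]) simp
    then have "real_of_int (int n ^ 2 - 4 * int k * int n + 4 * int k)
        \<le> real_of_int (int (4 * num_edges n E))"
      by (simp only: of_int_le_iff)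
    then show ?thesis by simp
  next
    case False
    text \<open>For \<open>l \<ge> 2\<close> the graph is triangle-free: the case \<open>k = 1\<close> of the neighbourhood bound.\<close>
    have "\<not> has_cycle n E (2 * 1 + 1)"
      using clk False l unfolding Clk_free_def by (elim conjE allE[of _ 1]) simp
    then have "(spec_rad n E)^2 \<le> real (num_edges n E)"
      using spec_rad_sq_le_num_edges[OF sg, of 1] n l by simp
    moreover have "(real n + 2 - 2 * real k)^2 \<le> (real m)^2"
      using l n unfolding m_def by (intro power_mono) auto
    moreover have "(real n + 2 - 2 * real k)^2 - 1 - ((real n)^2 - 4 * real k * real n + 4 * real k)
        = 4 * real n + (2 * real k - 3)^2 - 6"
      by (simp add: power2_eq_square algebra_simps)
    moreover have "0 \<le> (2 * real k - 3)^2" "2 \<le> real n" "(real m)^2 = real m * real m"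
      using l n by (auto simp: power2_eq_square)
    ultimately show ?thesis using lower by linarith
  qed
qed

theorem lemma4p2:
  fixes l k n :: nat and E :: "nat \<Rightarrow> nat \<Rightarrow> bool"
  assumes "1 \<le> l" and "l \<le> k - 1" and "n \<ge> 187 * k"
    and "extremal l k n E"
  shows "spec_rad n E > of_int \<lfloor>(real n - 2 * real l) / 2\<rfloor>
    \<and> of_int \<lfloor>(real n - 2 * real l) / 2\<rfloor> > real n / 2 - real k
    \<and> real (num_edges n E) \<ge> (real n)^2 / 4 - real k * real n + real k"
proof -
  have l: "1 \<le> l" "l < k" and n: "2 * k \<le> n" using assms(1-3) by auto
  define m where "m = n - 2 * l"
  have real_m: "real m = real n - 2 * real l" using l n unfolding m_def by simp
  have "(real n - 2 * real l) / 2 = real m / real (2::nat)" using real_m by simp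
  then have floor: "\<lfloor>(real n - 2 * real l) / 2\<rfloor> = int (m div 2)"
    by (simp only: floor_divide_of_nat_eq)
  have "real (m div 2) = sqrt (real (m div 2) * real (m div 2))" by simp
  also have "\<dots> \<le> sqrt (real (m div 2) * real (m - m div 2))"
    by (intro real_sqrt_le_mono mult_left_mono) auto
  also have "\<dots> < spec_rad n E"
    using extremal_spec_rad_gt[OF l n assms(4)] unfolding m_def .
  finally have "real (m div 2) < spec_rad n E" .
  moreover have "real m \<le> 2 * real (m div 2) + 1" by linarith
  then have "real n / 2 - real k < real (m div 2)" using real_m l by linarith
  ultimately show ?thesis using extremal_num_edges_ge[OF l n assms(4)] floor by simp
qed

end
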